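(* Let $\lambda>0$ and $\alpha_1,\dots,\alpha_n,\alpha^*_1,\dots,\alpha^*_n>0$. Let $X_1,\dots,X_n$ be mutually independent with $X_i\sim\mathrm{GE}(\alpha_i,\lambda)$ and $X^*_1,\dots,X^*_n$ mutually independent with $X^*_i\sim\mathrm{GE}(\alpha^*_i,\lambda)$. If $\sum_{i=1}^{j}\alpha^*_{(i)}\ge\sum_{i=1}^{j}\alpha_{(i)}$ for all $j=1,\dots,n$, then $X_{1:n}\le_{\rm hr}X^*_{1:n}$.
   Context: $X\sim\mathrm{GE}(\alpha,\lambda)$ (generalized exponential) means $X$ has distribution function $(1-e^{-\lambda x})^{\alpha}$, $x>0$. $X_{1:n}=\min_i X_i$. $\alpha_{(1)}\le\dots\le\alpha_{(n)}$ are the components in increasing order. $X\le_{\rm hr}Y$ means the hazard rate of $X$ is pointwise $\ge$ that of $Y$. *)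

theory Defs
  imports "HOL-Probability.Probability"
begin

definition GE_cdf :: "real \<Rightarrow> real \<Rightarrow> real \<Rightarrow> real" where
  "GE_cdf a l x = (if x > 0 then (1 - exp (- l * x)) powr a else 0)"

definition survival :: "'a measure \<Rightarrow> ('a \<Rightarrow> real) \<Rightarrow> real \<Rightarrow> real" where
  "survival M Y x = measure M {\<omega> \<in> space M. Y \<omega> > x}"

definition hazard_rate :: "'a measure \<Rightarrow> ('a \<Rightarrow> real) \<Rightarrow> real \<Rightarrow> real" where
  "hazard_rate M Y x = - deriv (survival M Y) x / survival M Y x"

text \<open>Hazard rate order X <=_hr Y (X on M, Y on N), for nonnegative lifetimes:
  the hazard rate of X is pointwise at least that of Y on the support (0, infinity).\<close>
definition hr_le :: "'a measure \<Rightarrow> ('a \<Rightarrow> real) \<Rightarrow> 'b measure \<Rightarrow> ('b \<Rightarrow> real) \<Rightarrow> bool" where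
  "hr_le M X N Y \<longleftrightarrow> (\<forall>x > 0. hazard_rate M X x \<ge> hazard_rate N Y x)"

definition ord_stat :: "(nat \<Rightarrow> real) \<Rightarrow> nat \<Rightarrow> nat \<Rightarrow> real" where
  "ord_stat a n i = sort (map a [1..<Suc n]) ! (i - 1)"

end

theory Submission
  imports Defs
begin

text \<open>
  Fix \<open>x > 0\<close> and put \<open>u = 1 - exp (-\<lambda>x)\<close>, \<open>t = - ln u\<close>. The survival function of a minimum of
  independent lifetimes is the product of theirs, so its hazard rate is the sum of the component
  hazard rates, and for \<open>GE(\<alpha>, \<lambda>)\<close> that rate is \<open>\<lambda> exp (-\<lambda>x) / (u t) \<cdot> \<phi> (t \<alpha>)\<close> with
  \<open>\<phi> s = s / (exp s - 1)\<close>. As \<open>\<phi>\<close> is decreasing and convex on \<open>(0, \<infinity>)\<close>, the weak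
  supermajorization of the \<open>\<alpha>\<close> by the \<open>\<alpha>\<^sup>*\<close> yields \<open>\<Sum> \<phi> (t \<alpha>\<^sup>*\<^sub>i) \<le> \<Sum> \<phi> (t \<alpha>\<^sub>i)\<close>.
\<close>

definition phi :: "real \<Rightarrow> real" where "phi s = s / (exp s - 1)"

definition dphi :: "real \<Rightarrow> real" where
  "dphi s = (exp s - 1 - s * exp s) / (exp s - 1)\<^sup>2"

lemma phi_has_real_derivative:
  assumes "s > 0" shows "(phi has_real_derivative dphi s) (at s)"
proof -
  have ne: "exp s - 1 \<noteq> 0" using assms by simp
  have "((\<lambda>s. s / (exp s - 1)) has_real_derivative
          (1 * (exp s - 1) - s * exp s) / ((exp s - 1) * (exp s - 1))) (at s)"
    by (rule DERIV_divide) (use assms in \<open>auto intro!: derivative_eq_intros simp: ne\<close>)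
  then show ?thesis unfolding phi_def[abs_def] dphi_def by (simp add: power2_eq_square)
qed

lemma dphi_has_real_derivative:
  assumes "s > 0"
  shows "(dphi has_real_derivative exp s * (s * (exp s + 1) - 2 * (exp s - 1)) / (exp s - 1) ^ 3) (at s)"
proof -
  define e where "e = exp s"
  have ne: "e - 1 \<noteq> 0" using assms by (simp add: e_def)
  have "(dphi has_real_derivative
          (- s * e * (e - 1)\<^sup>2 - (e - 1 - s * e) * (2 * (e - 1) * e)) / ((e - 1)\<^sup>2 * (e - 1)\<^sup>2)) (at s)"
    unfolding dphi_def[abs_def] e_def
    by (rule DERIV_divide) (use assms in \<open>auto intro!: derivative_eq_intros simp: ne[unfolded e_def] algebra_simps\<close>)
  moreover have "- s * e * (e - 1)\<^sup>2 - (e - 1 - s * e) * (2 * (e - 1) * e)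
      = (e - 1) * (e * (s * (e + 1) - 2 * (e - 1)))"
    by (simp add: power2_eq_square algebra_simps)
  moreover have "(e - 1)\<^sup>2 * (e - 1)\<^sup>2 = (e - 1) * (e - 1) ^ 3"
    by (simp add: power2_eq_square power3_eq_cube)
  ultimately show ?thesis using ne by (simp add: e_def)
qed

lemma dphi_nonpos:
  assumes "s > 0" shows "dphi s \<le> 0"
proof -
  have "exp s * (1 - s) \<le> exp s * exp (- s)"
    using exp_ge_add_one_self[of "- s"] by (intro mult_left_mono) auto
  then have "exp s - 1 - s * exp s \<le> 0" by (simp add: exp_minus algebra_simps)
  then show ?thesis unfolding dphi_def by (intro divide_nonpos_nonneg) auto
qed

lemma one_sub_exp_add_mult_exp_nonneg:
  fixes s :: real assumes "s \<ge> 0" shows "0 \<le> 1 - exp s + s * exp s"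
proof -
  have "(\<lambda>s. 1 - exp s + s * exp s) 0 \<le> (\<lambda>s. 1 - exp s + s * exp s) s"
  proof (rule DERIV_nonneg_imp_nondecreasing[OF assms])
    fix y :: real assume "0 \<le> y"
    then show "\<exists>d. ((\<lambda>s. 1 - exp s + s * exp s) has_real_derivative d) (at y) \<and> d \<ge> 0"
      by (intro exI[of _ "y * exp y"] conjI) (auto intro!: derivative_eq_intros)
  qed
  then show ?thesis by simp
qed

lemma two_mult_exp_sub_one_le:
  fixes s :: real assumes "s \<ge> 0" shows "2 * (exp s - 1) \<le> s * (exp s + 1)"
proof -
  have "(\<lambda>s. s * (exp s + 1) - 2 * (exp s - 1)) 0 \<le> (\<lambda>s. s * (exp s + 1) - 2 * (exp s - 1)) s"
  proof (rule DERIV_nonneg_imp_nondecreasing[OF assms])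
    fix y :: real assume "0 \<le> y"
    then show "\<exists>d. ((\<lambda>s. s * (exp s + 1) - 2 * (exp s - 1)) has_real_derivative d) (at y) \<and> d \<ge> 0"
      using one_sub_exp_add_mult_exp_nonneg[of y]
      by (intro exI[of _ "1 - exp y + y * exp y"] conjI) (auto intro!: derivative_eq_intros simp: algebra_simps)
  qed
  then show ?thesis by simp
qed

lemma dphi_mono:
  assumes "0 < a" "a \<le> b" shows "dphi a \<le> dphi b"
proof (rule DERIV_nonneg_imp_nondecreasing[OF assms(2)])
  fix s assume "a \<le> s"
  with assms have "s > 0" by simp
  then show "\<exists>d. (dphi has_real_derivative d) (at s) \<and> d \<ge> 0"
    using dphi_has_real_derivative two_mult_exp_sub_one_le[of s]
    by (intro exI conjI) (auto intro!: divide_nonneg_pos)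
qed

lemma sum_mult_le_of_prefix_sums_nonneg:
  fixes d e :: "nat \<Rightarrow> real"
  assumes "\<And>i j. i \<le> j \<Longrightarrow> j < m \<Longrightarrow> d i \<le> d j"
    and "\<And>j. j \<le> m \<Longrightarrow> 0 \<le> (\<Sum>i<j. e i)"
    and "\<And>i. i < m \<Longrightarrow> d i \<le> D"
  shows "(\<Sum>i<m. d i * e i) \<le> D * (\<Sum>i<m. e i)"
  using assms
proof (induction m arbitrary: D)
  case 0
  then show ?case by simp
next
  case (Suc m)
  have "(\<Sum>i<Suc m. d i * e i) = (\<Sum>i<m. d i * e i) + d m * e m" by simp
  also have "\<dots> \<le> d m * (\<Sum>i<m. e i) + d m * e m"
    using Suc.prems by (simp add: Suc.IH)
  also have "\<dots> = d m * (\<Sum>i<Suc m. e i)" by (simp add: algebra_simps)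
  also have "\<dots> \<le> D * (\<Sum>i<Suc m. e i)"
    using Suc.prems(2)[of "Suc m"] Suc.prems(3)[of m] by (intro mult_right_mono) auto
  finally show ?case .
qed

lemma diff_le_deriv_mult_diff:
  fixes f f' :: "real \<Rightarrow> real"
  assumes deriv: "\<And>x. x > 0 \<Longrightarrow> (f has_real_derivative f' x) (at x)"
    and mono: "\<And>x y. 0 < x \<Longrightarrow> x \<le> y \<Longrightarrow> f' x \<le> f' y"
    and "a > 0" "b > 0"
  shows "f b - f a \<le> f' b * (b - a)"
proof (cases a b rule: linorder_cases)
  case less
  then obtain z where z: "a < z" "z < b" "f b - f a = (b - a) * f' z"
    using MVT2[of a b f f'] deriv \<open>a > 0\<close> by force
  then show ?thesis
    using mono[of z b] less \<open>a > 0\<close> by (simp add: mult.commute mult_right_mono)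
next
  case greater
  then obtain z where z: "b < z" "z < a" "f a - f b = (a - b) * f' z"
    using MVT2[of b a f f'] deriv \<open>b > 0\<close> by force
  then have "f' b * (a - b) \<le> f' z * (a - b)"
    using mono[of b z] greater \<open>b > 0\<close> by (intro mult_right_mono) auto
  then show ?thesis using z by (simp add: algebra_simps)
qed simp

lemma sum_le_of_weak_supermajorization:
  fixes f f' :: "real \<Rightarrow> real" and a b :: "nat \<Rightarrow> real"
  assumes deriv: "\<And>x. x > 0 \<Longrightarrow> (f has_real_derivative f' x) (at x)"
    and mono: "\<And>x y. 0 < x \<Longrightarrow> x \<le> y \<Longrightarrow> f' x \<le> f' y"
    and nonpos: "\<And>x. x > 0 \<Longrightarrow> f' x \<le> 0"
    and pos: "\<And>i. i < n \<Longrightarrow> a i > 0" "\<And>i. i < n \<Longrightarrow> b i > 0"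
    and sorted: "\<And>i j. i \<le> j \<Longrightarrow> j < n \<Longrightarrow> b i \<le> b j"
    and prefix: "\<And>j. j \<le> n \<Longrightarrow> (\<Sum>i<j. a i) \<le> (\<Sum>i<j. b i)"
  shows "(\<Sum>i<n. f (b i)) \<le> (\<Sum>i<n. f (a i))"
proof -
  \<comment> \<open>tangent bounds at the \<open>b i\<close>, then Abel summation against the increasing slopes \<open>f' (b i)\<close>\<close>
  have "(\<Sum>i<n. f (b i)) - (\<Sum>i<n. f (a i)) = (\<Sum>i<n. f (b i) - f (a i))"
    by (simp add: sum_subtractf)
  also have "\<dots> \<le> (\<Sum>i<n. f' (b i) * (b i - a i))"
    by (intro sum_mono diff_le_deriv_mult_diff[OF deriv mono]) (auto intro: pos)
  also have "\<dots> \<le> 0 * (\<Sum>i<n. b i - a i)"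
  proof (rule sum_mult_le_of_prefix_sums_nonneg)
    show "f' (b i) \<le> f' (b j)" if "i \<le> j" "j < n" for i j
      using mono[of "b i" "b j"] sorted[OF that] pos(2)[of i] that by simp
    show "0 \<le> (\<Sum>i<j. b i - a i)" if "j \<le> n" for j
      using prefix[OF that] by (simp add: sum_subtractf)
    show "f' (b i) \<le> 0" if "i < n" for i
      using nonpos pos(2) that by simp
  qed
  finally show ?thesis by simp
qed

lemma sum_ord_stat:
  "(\<Sum>i=1..n. g (ord_stat a n i)) = (\<Sum>i=1..n. g (a i) :: real)"
proof -
  let ?xs = "map a [1..<Suc n]"
  have "(\<Sum>i=1..n. g (ord_stat a n i)) = (\<Sum>i<n. g (sort ?xs ! i))"
    unfolding One_nat_def sum.atLeast1_atMost_eq ord_stat_def by simp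
  also have "\<dots> = sum_list (map g (sort ?xs))"
    by (simp del: upt_Suc add: sum_list_sum_nth atLeast0LessThan)
  also have "\<dots> = sum_list (map g ?xs)"
    by (metis mset_map mset_sort sum_mset_sum_list)
  also have "\<dots> = (\<Sum>i=1..n. g (a i))"
    by (simp del: upt_Suc add: sum_list_distinct_conv_sum_set atLeastLessThanSuc_atLeastAtMost)
  finally show ?thesis .
qed

lemma ord_stat_in_image:
  assumes "i \<in> {1..n}" shows "ord_stat a n i \<in> a ` {1..n}"
proof -
  let ?xs = "map a [1..<Suc n]"
  have "sort ?xs ! (i - 1) \<in> set (sort ?xs)"
    using assms by (intro nth_mem) auto
  then show ?thesis
    unfolding ord_stat_def by (simp del: upt_Suc add: atLeastLessThanSuc_atLeastAtMost)
qed

lemma ord_stat_mono: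
  assumes "1 \<le> i" "i \<le> j" "j \<le> n" shows "ord_stat a n i \<le> ord_stat a n j"
  unfolding ord_stat_def using assms by (intro sorted_nth_mono) auto

lemma sum_phi_le_of_ord_stat_prefix_sums_le:
  assumes "t > 0" and "\<forall>i\<in>{1..n}. alpha i > 0" and "\<forall>i\<in>{1..n}. alphas i > 0"
    and "\<forall>j\<in>{1..n}. (\<Sum>i=1..j. ord_stat alpha n i) \<le> (\<Sum>i=1..j. ord_stat alphas n i)"
  shows "(\<Sum>i=1..n. phi (t * alphas i)) \<le> (\<Sum>i=1..n. phi (t * alpha i))"
proof -
  have "(\<Sum>i<n. phi (t * ord_stat alphas n (Suc i))) \<le> (\<Sum>i<n. phi (t * ord_stat alpha n (Suc i)))"
  proof (rule sum_le_of_weak_supermajorization[where f = "\<lambda>a. phi (t * a)" and f' = "\<lambda>a. dphi (t * a) * t"])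
    show "((\<lambda>a. phi (t * a)) has_real_derivative dphi (t * x) * t) (at x)" if "x > 0" for x
      using DERIV_chain2[OF phi_has_real_derivative DERIV_cmult_Id] that assms(1) by simp
    show "dphi (t * x) * t \<le> dphi (t * y) * t" if "0 < x" "x \<le> y" for x y
      using dphi_mono[of "t * x" "t * y"] that assms(1) by (simp add: mult_right_mono)
    show "dphi (t * x) * t \<le> 0" if "x > 0" for x
      using dphi_nonpos[of "t * x"] that assms(1) by (simp add: mult_nonpos_nonneg)
    show "ord_stat alpha n (Suc i) > 0" "ord_stat alphas n (Suc i) > 0" if "i < n" for i
      using ord_stat_in_image[of "Suc i" n alpha] ord_stat_in_image[of "Suc i" n alphas] that assms(2,3)
      by auto
    show "ord_stat alphas n (Suc i) \<le> ord_stat alphas n (Suc j)" if "i \<le> j" "j < n" for i j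
      using that by (intro ord_stat_mono) auto
    show "(\<Sum>i<j. ord_stat alpha n (Suc i)) \<le> (\<Sum>i<j. ord_stat alphas n (Suc i))" if "j \<le> n" for j
      using that assms(4) by (cases "j = 0") (auto simp: sum.atLeast1_atMost_eq)
  qed
  then show ?thesis
    using sum_ord_stat[of "\<lambda>a. phi (t * a)" alpha n] sum_ord_stat[of "\<lambda>a. phi (t * a)" alphas n]
    by (simp add: sum.atLeast1_atMost_eq)
qed

lemma (in prob_space) survival_eq_one_minus_cdf:
  assumes "Y \<in> borel_measurable M"
  shows "survival M Y x = 1 - prob {\<omega> \<in> space M. Y \<omega> \<le> x}"
proof -
  have "{\<omega> \<in> space M. Y \<omega> \<le> x} \<in> events" using assms by measurable
  moreover have "{\<omega> \<in> space M. Y \<omega> > x} = space M - {\<omega> \<in> space M. Y \<omega> \<le> x}" by auto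
  ultimately show ?thesis unfolding survival_def by (simp add: prob_compl)
qed

lemma (in prob_space) survival_Min_indep_vars:
  assumes "finite I" "I \<noteq> {}" "indep_vars (\<lambda>_. borel) X I"
  shows "survival M (\<lambda>\<omega>. Min ((\<lambda>i. X i \<omega>) ` I)) x = (\<Prod>i\<in>I. survival M (X i) x)"
proof -
  have "{\<omega> \<in> space M. x < Min ((\<lambda>i. X i \<omega>) ` I)} = (\<Inter>i\<in>I. X i -` {x<..} \<inter> space M)"
    using assms(1,2) by auto
  then have "survival M (\<lambda>\<omega>. Min ((\<lambda>i. X i \<omega>) ` I)) x = prob (\<Inter>i\<in>I. X i -` {x<..} \<inter> space M)"
    unfolding survival_def by simp
  also have "\<dots> = (\<Prod>i\<in>I. prob (X i -` {x<..} \<inter> space M))"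
    using assms by (intro indep_varsD) auto
  also have "\<dots> = (\<Prod>i\<in>I. survival M (X i) x)"
    unfolding survival_def by (intro prod.cong) (auto simp: Int_def vimage_def conj_commute)
  finally show ?thesis .
qed

lemma hazard_rate_prod:
  assumes "open A" "x \<in> A" "\<And>y. y \<in> A \<Longrightarrow> survival M Y y = (\<Prod>i\<in>I. S i y)"
    and "\<And>i. i \<in> I \<Longrightarrow> (S i has_real_derivative S' i) (at x)"
    and "\<And>i. i \<in> I \<Longrightarrow> S i x \<noteq> 0"
  shows "hazard_rate M Y x = (\<Sum>i\<in>I. - S' i / S i x)"
proof -
  have "((\<lambda>y. \<Prod>i\<in>I. S i y) has_real_derivative (\<Prod>i\<in>I. S i x) * (\<Sum>i\<in>I. S' i / S i x)) (at x)"
    using assms(5,4) by (rule has_field_derivative_prod')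
  then have "(survival M Y has_real_derivative (\<Prod>i\<in>I. S i x) * (\<Sum>i\<in>I. S' i / S i x)) (at x)"
    by (rule has_field_derivative_transform_within_open[OF _ assms(1,2)]) (simp add: assms(3))
  moreover have "(\<Prod>i\<in>I. S i x) \<noteq> 0"
    using assms(5) by (cases "finite I") auto
  ultimately show ?thesis
    unfolding hazard_rate_def using assms(2,3) by (simp add: DERIV_imp_deriv sum_negf)
qed

lemma GE_survival_has_real_derivative:
  assumes "lam > 0" "y > 0"
  shows "((\<lambda>y. 1 - (1 - exp (- lam * y)) powr a) has_real_derivative
           - (a * (1 - exp (- lam * y)) powr (a - 1) * (lam * exp (- lam * y)))) (at y)"
proof -
  have "0 < 1 - exp (- lam * y)" using assms by simp
  then show ?thesis by (auto intro!: derivative_eq_intros)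
qed

lemma GE_hazard_eq_phi:
  fixes a u L :: real
  assumes "0 < u" "u < 1" "a > 0"
  shows "a * u powr (a - 1) * L / (1 - u powr a) = L / (u * - ln u) * phi (- ln u * a)"
proof -
  define t where "t = - ln u"
  have "t > 0" using assms by (simp add: t_def)
  have ua: "u powr a = exp (- (t * a))"
    using assms by (simp add: powr_def t_def)
  have ua1: "u powr (a - 1) = exp (- (t * a)) / u"
    using assms ua by (simp add: powr_diff)
  have "exp (t * a) > 1" using \<open>t > 0\<close> assms by simp
  have "a * u powr (a - 1) * L / (1 - u powr a) = a * (exp (- (t * a)) / u) * L / (1 - exp (- (t * a)))"
    unfolding ua ua1 ..
  also have "\<dots> = L / (u * t) * (t * a / (exp (t * a) - 1))"
    using \<open>exp (t * a) > 1\<close> \<open>t > 0\<close> assms by (simp add: exp_minus field_simps)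
  finally show ?thesis unfolding phi_def t_def .
qed

lemma (in prob_space) hazard_rate_Min_GE:
  fixes X :: "'i \<Rightarrow> 'a \<Rightarrow> real"
  assumes "finite I" "I \<noteq> {}" "lam > 0" "\<forall>i\<in>I. alpha i > 0"
    and "indep_vars (\<lambda>_. borel) X I"
    and "\<forall>i\<in>I. \<forall>x. prob {\<omega> \<in> space M. X i \<omega> \<le> x} = GE_cdf (alpha i) lam x"
    and "x > 0"
  defines "u \<equiv> 1 - exp (- lam * x)"
  shows "hazard_rate M (\<lambda>\<omega>. Min ((\<lambda>i. X i \<omega>) ` I)) x
           = lam * exp (- lam * x) / (u * - ln u) * (\<Sum>i\<in>I. phi (- ln u * alpha i))"
proof -
  define S where "S i y = 1 - (1 - exp (- lam * y)) powr alpha i" for i y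
  define S' where "S' i = - (alpha i * u powr (alpha i - 1) * (lam * exp (- lam * x)))" for i
  have u: "0 < u" "u < 1" using assms(3,7) by (auto simp: u_def)
  have "X i \<in> borel_measurable M" if "i \<in> I" for i
    using assms(5) that unfolding indep_vars_def by auto
  then have "survival M (\<lambda>\<omega>. Min ((\<lambda>i. X i \<omega>) ` I)) y = (\<Prod>i\<in>I. S i y)" if "y > 0" for y
    using assms(1,2,5,6) that
    by (simp add: survival_Min_indep_vars survival_eq_one_minus_cdf GE_cdf_def S_def cong: prod.cong)
  moreover have "(S i has_real_derivative S' i) (at x)" for i
    unfolding S_def S'_def u_def using assms(3,7) by (rule GE_survival_has_real_derivative)
  moreover have "S i x \<noteq> 0" if "i \<in> I" for i
  proof -
    have "u powr alpha i < 1 powr alpha i"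
      using u assms(4) that by (intro powr_less_mono2) auto
    then show ?thesis by (simp add: S_def u_def)
  qed
  ultimately have "hazard_rate M (\<lambda>\<omega>. Min ((\<lambda>i. X i \<omega>) ` I)) x = (\<Sum>i\<in>I. - S' i / S i x)"
    using assms(7) by (intro hazard_rate_prod[where A = "{0<..}"]) auto
  also have "\<dots> = (\<Sum>i\<in>I. lam * exp (- lam * x) / (u * - ln u) * phi (- ln u * alpha i))"
    using GE_hazard_eq_phi[OF u] assms(4) by (intro sum.cong) (auto simp: S_def S'_def u_def)
  finally show ?thesis by (simp add: sum_distrib_left)
qed

theorem mainTheorem11:
  fixes M :: "'a measure" and N :: "'b measure"
    and X :: "nat \<Rightarrow> 'a \<Rightarrow> real" and Xs :: "nat \<Rightarrow> 'b \<Rightarrow> real"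
    and alpha alphas :: "nat \<Rightarrow> real" and lam :: real and n :: nat
  assumes "prob_space M" and "prob_space N"
    and "n \<ge> 1" and "lam > 0"
    and "\<forall>i\<in>{1..n}. alpha i > 0" and "\<forall>i\<in>{1..n}. alphas i > 0"
    and "prob_space.indep_vars M (\<lambda>_. borel) X {1..n}"
    and "prob_space.indep_vars N (\<lambda>_. borel) Xs {1..n}"
    and "\<forall>i\<in>{1..n}. \<forall>x. measure M {\<omega> \<in> space M. X i \<omega> \<le> x} = GE_cdf (alpha i) lam x"
    and "\<forall>i\<in>{1..n}. \<forall>x. measure N {\<omega> \<in> space N. Xs i \<omega> \<le> x} = GE_cdf (alphas i) lam x"
    and "\<forall>j\<in>{1..n}. (\<Sum>i=1..j. ord_stat alphas n i) \<ge> (\<Sum>i=1..j. ord_stat alpha n i)"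
  shows "hr_le M (\<lambda>\<omega>. Min ((\<lambda>i. X i \<omega>) ` {1..n}))
               N (\<lambda>\<omega>. Min ((\<lambda>i. Xs i \<omega>) ` {1..n}))"
  unfolding hr_le_def
proof (intro allI impI)
  fix x :: real assume "x > 0"
  define u where "u = 1 - exp (- lam * x)"
  have "0 < u" "u < 1" using \<open>x > 0\<close> assms(4) by (auto simp: u_def)
  define C where "C = lam * exp (- lam * x) / (u * - ln u)"
  have "C > 0"
    unfolding C_def using \<open>0 < u\<close> \<open>u < 1\<close> assms(4) by (intro divide_pos_pos mult_pos_pos) auto
  have "(\<Sum>i=1..n. phi (- ln u * alphas i)) \<le> (\<Sum>i=1..n. phi (- ln u * alpha i))"
    using \<open>0 < u\<close> \<open>u < 1\<close> assms(5,6,11) by (intro sum_phi_le_of_ord_stat_prefix_sums_le) auto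
  then have "C * (\<Sum>i=1..n. phi (- ln u * alphas i)) \<le> C * (\<Sum>i=1..n. phi (- ln u * alpha i))"
    using \<open>C > 0\<close> by simp
  then show "hazard_rate N (\<lambda>\<omega>. Min ((\<lambda>i. Xs i \<omega>) ` {1..n})) x
           \<le> hazard_rate M (\<lambda>\<omega>. Min ((\<lambda>i. X i \<omega>) ` {1..n})) x"
    using prob_space.hazard_rate_Min_GE[OF assms(1), of "{1..n}" lam alpha X x]
      prob_space.hazard_rate_Min_GE[OF assms(2), of "{1..n}" lam alphas Xs x]
      assms(3,4,5,6,7,8,9,10) \<open>x > 0\<close>
    unfolding C_def u_def by simp
qed

end
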